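(* Let $R$ be a saturated transfer system on a finite modular lattice $M$ and let $x,y,x\wedge y,x\vee y$ form a covering diamond in $M$. If three of the four covering relations $x\wedge y\le x$, $x\wedge y\le y$, $x\le x\vee y$, $y\le x\vee y$ belong to $R$, then the fourth also belongs to $R$.
   Context: A lattice $M$ is modular if $a\le b$ implies $a\vee(x\wedge b)=(a\vee x)\wedge b$. A transfer system on a finite lattice $(P,\le)$ is a partial order $R$ refining $\le$ closed under restriction: $x\,R\,z$ and $y\le z$ imply $(x\wedge y)\,R\,y$; it is saturated if $x\,R\,y$, $y\le z$ and $x\,R\,z$ imply $y\,R\,z$. A covering diamond is a quadruple $x,y,x\wedge y,x\vee y$ with $x\ne y$ such that $x\vee y$ covers $x$ and $y$, and $x$ and $y$ both cover $x\wedge y$. *)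

theory Defs
  imports Main
begin

definition modular_lattice :: "('a::lattice) itself \<Rightarrow> bool" where
  "modular_lattice _ \<longleftrightarrow>
     (\<forall>a b x :: 'a. a \<le> b \<longrightarrow> sup a (inf x b) = inf (sup a x) b)"

definition transfer_system :: "('a::lattice \<Rightarrow> 'a \<Rightarrow> bool) \<Rightarrow> bool" where
  "transfer_system R \<longleftrightarrow>
     (\<forall>x. R x x) \<and>
     (\<forall>x y z. R x y \<longrightarrow> R y z \<longrightarrow> R x z) \<and>
     (\<forall>x y. R x y \<longrightarrow> R y x \<longrightarrow> x = y) \<and>
     (\<forall>x y. R x y \<longrightarrow> x \<le> y) \<and>
     (\<forall>x y z. R x z \<longrightarrow> y \<le> z \<longrightarrow> R (inf x y) y)"

definition saturated :: "('a::lattice \<Rightarrow> 'a \<Rightarrow> bool) \<Rightarrow> bool" where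
  "saturated R \<longleftrightarrow> (\<forall>x y z. R x y \<longrightarrow> y \<le> z \<longrightarrow> R x z \<longrightarrow> R y z)"

definition covers :: "'a::order \<Rightarrow> 'a \<Rightarrow> bool" where
  "covers a b \<longleftrightarrow> a < b \<and> \<not> (\<exists>z. a < z \<and> z < b)"

definition covering_diamond :: "'a::lattice \<Rightarrow> 'a \<Rightarrow> bool" where
  "covering_diamond x y \<longleftrightarrow> x \<noteq> y \<and>
     covers x (sup x y) \<and> covers y (sup x y) \<and>
     covers (inf x y) x \<and> covers (inf x y) y"

end

theory Submission
  imports Defs
begin

text \<open>Restricting the edge \<open>y \<rightarrow> x \<squnion> y\<close> along \<open>x \<le> x \<squnion> y\<close> yields \<open>x \<sqinter> y \<rightarrow> x\<close>, and symmetrically;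
  so a missing lower edge is recovered from the opposite upper edge. A missing upper edge,
  say \<open>x \<rightarrow> x \<squnion> y\<close>, is recovered by saturation from \<open>x \<sqinter> y \<rightarrow> x\<close> and the composite
  \<open>x \<sqinter> y \<rightarrow> y \<rightarrow> x \<squnion> y\<close>.\<close>

lemma transfer_system_trans:
  assumes "transfer_system R" and "R a b" and "R b c"
  shows "R a c"
  using assms unfolding transfer_system_def by blast

lemma transfer_system_restrict:
  assumes "transfer_system R" and "R a c" and "b \<le> c"
  shows "R (inf a b) b"
  using assms unfolding transfer_system_def by blast

lemma saturatedD:
  assumes "saturated R" and "R a b" and "b \<le> c" and "R a c"
  shows "R b c"
  using assms unfolding saturated_def by blast

lemma transfer_system_inf_edge:
  assumes "transfer_system R" and "R y (sup x y)"
  shows "R (inf x y) x"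
  using transfer_system_restrict[OF assms, of x] by (simp add: inf_commute)

lemma saturated_sup_edge:
  assumes "transfer_system R" and "saturated R"
    and "R (inf x y) x" and "R (inf x y) y" and "R y (sup x y)"
  shows "R x (sup x y)"
proof -
  have "R (inf x y) (sup x y)"
    using transfer_system_trans[OF assms(1,4,5)] .
  then show ?thesis
    using saturatedD[OF assms(2,3)] by simp
qed

theorem lemma3p5:
  fixes R :: "'a::{finite, lattice} \<Rightarrow> 'a \<Rightarrow> bool" and x y :: 'a
  assumes "modular_lattice TYPE('a)"
    and "transfer_system R"
    and "saturated R"
    and "covering_diamond x y"
  shows "(R (inf x y) y \<and> R x (sup x y) \<and> R y (sup x y) \<longrightarrow> R (inf x y) x) \<and>
         (R (inf x y) x \<and> R x (sup x y) \<and> R y (sup x y) \<longrightarrow> R (inf x y) y) \<and>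
         (R (inf x y) x \<and> R (inf x y) y \<and> R y (sup x y) \<longrightarrow> R x (sup x y)) \<and>
         (R (inf x y) x \<and> R (inf x y) y \<and> R x (sup x y) \<longrightarrow> R y (sup x y))"
proof -
  note ts = assms(2) and sat = assms(3)
  have "R y (sup x y) \<Longrightarrow> R (inf x y) x"
    using transfer_system_inf_edge[OF ts] .
  moreover have "R x (sup x y) \<Longrightarrow> R (inf x y) y"
    using transfer_system_inf_edge[OF ts, where x=y and y=x] by (simp add: inf_commute sup_commute)
  moreover have "R (inf x y) x \<Longrightarrow> R (inf x y) y \<Longrightarrow> R y (sup x y) \<Longrightarrow> R x (sup x y)"
    using saturated_sup_edge[OF ts sat] .
  moreover have "R (inf x y) x \<Longrightarrow> R (inf x y) y \<Longrightarrow> R x (sup x y) \<Longrightarrow> R y (sup x y)"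
    using saturated_sup_edge[OF ts sat, where x=y and y=x] by (simp add: inf_commute sup_commute)
  ultimately show ?thesis by blast
qed

end
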